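(* Let $u=u_1\cdots u_m$ be a quasi-strict pin word corresponding to a permutation $\pi$ and $w$ a strict pin word corresponding to a permutation $\sigma$. If $\phi(u_2\cdots u_m)$ is a factor of $\phi(w)$ beginning at a position $p\ge3$ (i.e. $\phi(w)=y\,\phi(u_2\cdots u_m)\,y'$ with $|y|\ge2$), then $\pi\le\sigma$.
   Context: Permutations of length $n$ are bijections of $\{1,\dots,n\}$, identified with their diagrams $\{(i,\sigma(i))\}$; $\pi\le\sigma$ means some subsequence of $\sigma$ is order isomorphic to $\pi$. Pins are points of $\mathbb{Z}^2$. A pin $p$ separates a set $P$ from a set $Q$ horizontally (resp. vertically) if the horizontal (resp. vertical) line through $p$ has $P$ strictly on one side and $Q$ strictly on the other. A pin sequence is a sequence $(p_1,\dots,p_k)$ of pins, no two in a common row or column, such that for every $i\ge2$, $p_i$ lies outside the bounding box of $\{p_1,\dots,p_{i-1}\}$ and either $p_i$ separates $p_{i-1}$ from $\{p_1,\dots,p_{i-2}\}$ or $p_i$ is independent from $\{p_1,\dots,p_{i-1}\}$. A pin representation of $\sigma$ is a pin sequence order isomorphic to its diagram. Pin words: given a pin representation $(p_1,\dots,p_n)$ and an origin $p_0$ such that $(p_0,\dots,p_n)$ is a pin sequence, each $p_i$ ($i\ge1$) is encoded by $U$ (resp. $D,L,R$) if $p_i$ separates $p_{i-1}$ from $\{p_0,\dots,p_{i-2}\}$ and lies above (resp. below, left of, right of) the bounding box of $\{p_0,\dots,p_{i-1}\}$, and by $1$ (resp. $2,3,4$) if $p_i$ is independent from $\{p_0,\dots,p_{i-1}\}$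 and lies in the up-right (resp. up-left, bottom-left, bottom-right) corner region of that bounding box. The word then corresponds to $\sigma$. Letters $1,2,3,4$ are numerals, $U,D,L,R$ directions. A strict pin word has length $\ge2$, a numeral first, then only directions; a quasi-strict pin word has length $\ge2$, two numerals first, then only directions. $\phi$ is defined on words consisting of a numeral followed by a nonempty word over $\{L,R,U,D\}$ alternating between $\{L,R\}$ and $\{U,D\}$, by $\phi(u'u'')=\varphi(u')u''$ for $|u'|=2$ with $\varphi$: $1R\mapsto RUR$, $2R\mapsto LUR$, $3R\mapsto LDR$, $4R\mapsto RDR$, $1L\mapsto RUL$, $2L\mapsto LUL$, $3L\mapsto LDL$, $4L\mapsto RDL$, $1U\mapsto URU$, $2U\mapsto ULU$, $3U\mapsto DLU$, $4U\mapsto DRU$, $1D\mapsto URD$, $2D\mapsto ULD$, $3D\mapsto DLD$, $4D\mapsto DRD$; on single numerals $\phi(1)=\{UR,RU\}$, $\phi(2)=\{UL,LU\}$, $\phi(3)=\{DL,LD\}$, $\phi(4)=\{RD,DR\}$ (for $m=2$ the hypothesis means some element of $\phi(u_2)$ occurs as stated). A factor is a contiguous subword; positions are numbered from $1$. *)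

theory Defs
  imports Main
begin

text \<open>A permutation of length n is a list containing each of 1..n exactly once;
  sigma ! (i-1) is sigma(i).\<close>
definition is_perm :: "nat list \<Rightarrow> bool" where
  "is_perm s \<longleftrightarrow> distinct s \<and> set s = {1..length s}"

definition patt_le :: "nat list \<Rightarrow> nat list \<Rightarrow> bool" where
  "patt_le p s \<longleftrightarrow> (\<exists>f :: nat \<Rightarrow> nat.
      (\<forall>i j. i < j \<and> j < length p \<longrightarrow> f i < f j) \<and>
      (\<forall>i < length p. f i < length s) \<and>
      (\<forall>i < length p. \<forall>j < length p. p ! i < p ! j \<longleftrightarrow> s ! (f i) < s ! (f j)))"

definition diagram :: "nat list \<Rightarrow> (int \<times> int) set" where
  "diagram s = {(int (i + 1), int (s ! i)) | i. i < length s}"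

type_synonym pin = "int \<times> int"

definition order_iso :: "(int \<times> int) set \<Rightarrow> (int \<times> int) set \<Rightarrow> bool" where
  "order_iso A B \<longleftrightarrow> (\<exists>f. bij_betw f A B \<and>
     (\<forall>p\<in>A. \<forall>q\<in>A. (fst p < fst q \<longleftrightarrow> fst (f p) < fst (f q)) \<and>
                     (snd p < snd q \<longleftrightarrow> snd (f p) < snd (f q))))"

definition sep_h :: "pin \<Rightarrow> pin set \<Rightarrow> pin set \<Rightarrow> bool" where
  "sep_h p P Q \<longleftrightarrow>
     ((\<forall>q\<in>P. snd q < snd p) \<and> (\<forall>q\<in>Q. snd p < snd q)) \<or>
     ((\<forall>q\<in>P. snd p < snd q) \<and> (\<forall>q\<in>Q. snd q < snd p))"

definition sep_v :: "pin \<Rightarrow> pin set \<Rightarrow> pin set \<Rightarrow> bool" where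
  "sep_v p P Q \<longleftrightarrow>
     ((\<forall>q\<in>P. fst q < fst p) \<and> (\<forall>q\<in>Q. fst p < fst q)) \<or>
     ((\<forall>q\<in>P. fst p < fst q) \<and> (\<forall>q\<in>Q. fst q < fst p))"

definition separates :: "pin \<Rightarrow> pin set \<Rightarrow> pin set \<Rightarrow> bool" where
  "separates p P Q \<longleftrightarrow> sep_h p P Q \<or> sep_v p P Q"

definition in_bbox :: "pin \<Rightarrow> pin set \<Rightarrow> bool" where
  "in_bbox p S \<longleftrightarrow> Min (fst ` S) \<le> fst p \<and> fst p \<le> Max (fst ` S) \<and>
                   Min (snd ` S) \<le> snd p \<and> snd p \<le> Max (snd ` S)"

definition independent :: "pin \<Rightarrow> pin set \<Rightarrow> bool" where
  "independent p P \<longleftrightarrow> \<not> in_bbox p P \<and>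
     \<not> (\<exists>A B. A \<noteq> {} \<and> B \<noteq> {} \<and> A \<union> B = P \<and> A \<inter> B = {} \<and> separates p A B)"

text \<open>Pin sequence (0-indexed list; index i here is p_(i+1) of the paper).\<close>
definition pin_seq :: "pin list \<Rightarrow> bool" where
  "pin_seq ps \<longleftrightarrow> distinct (map fst ps) \<and> distinct (map snd ps) \<and>
     (\<forall>i. 1 \<le> i \<and> i < length ps \<longrightarrow>
        \<not> in_bbox (ps ! i) (set (take i ps)) \<and>
        (separates (ps ! i) {ps ! (i - 1)} (set (take (i - 1) ps)) \<or>
         independent (ps ! i) (set (take i ps))))"

datatype letter = N1 | N2 | N3 | N4 | U | D | L | R

definition is_numeral :: "letter \<Rightarrow> bool" where
  "is_numeral c \<longleftrightarrow> c \<in> {N1, N2, N3, N4}"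

definition is_dir :: "letter \<Rightarrow> bool" where
  "is_dir c \<longleftrightarrow> c \<in> {U, D, L, R}"

definition above :: "pin \<Rightarrow> pin set \<Rightarrow> bool" where
  "above p S \<longleftrightarrow> Min (fst ` S) \<le> fst p \<and> fst p \<le> Max (fst ` S) \<and> Max (snd ` S) < snd p"
definition below :: "pin \<Rightarrow> pin set \<Rightarrow> bool" where
  "below p S \<longleftrightarrow> Min (fst ` S) \<le> fst p \<and> fst p \<le> Max (fst ` S) \<and> snd p < Min (snd ` S)"
definition left_of :: "pin \<Rightarrow> pin set \<Rightarrow> bool" where
  "left_of p S \<longleftrightarrow> Min (snd ` S) \<le> snd p \<and> snd p \<le> Max (snd ` S) \<and> fst p < Min (fst ` S)"
definition right_of :: "pin \<Rightarrow> pin set \<Rightarrow> bool" where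
  "right_of p S \<longleftrightarrow> Min (snd ` S) \<le> snd p \<and> snd p \<le> Max (snd ` S) \<and> Max (fst ` S) < fst p"

definition enc_ok :: "pin list \<Rightarrow> pin \<Rightarrow> letter \<Rightarrow> bool" where
  "enc_ok pre p c \<longleftrightarrow>
     (let S = set pre; sp = separates p {last pre} (set (butlast pre)); ind = independent p S in
      case c of
        U \<Rightarrow> sp \<and> above p S
      | D \<Rightarrow> sp \<and> below p S
      | L \<Rightarrow> sp \<and> left_of p S
      | R \<Rightarrow> sp \<and> right_of p S
      | N1 \<Rightarrow> ind \<and> Max (fst ` S) < fst p \<and> Max (snd ` S) < snd p
      | N2 \<Rightarrow> ind \<and> fst p < Min (fst ` S) \<and> Max (snd ` S) < snd p
      | N3 \<Rightarrow> ind \<and> fst p < Min (fst ` S) \<and> snd p < Min (snd ` S)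
      | N4 \<Rightarrow> ind \<and> Max (fst ` S) < fst p \<and> snd p < Min (snd ` S))"

definition corresponds :: "letter list \<Rightarrow> nat list \<Rightarrow> bool" where
  "corresponds w s \<longleftrightarrow> is_perm s \<and>
     (\<exists>p0 ps. length ps = length w \<and> pin_seq ps \<and> pin_seq (p0 # ps) \<and>
        order_iso (set ps) (diagram s) \<and>
        (\<forall>i < length w. enc_ok (take (i + 1) (p0 # ps)) (ps ! i) (w ! i)))"

definition strict_word :: "letter list \<Rightarrow> bool" where
  "strict_word w \<longleftrightarrow> length w \<ge> 2 \<and> is_numeral (w ! 0) \<and> (\<forall>c \<in> set (drop 1 w). is_dir c)"

definition quasi_strict_word :: "letter list \<Rightarrow> bool" where
  "quasi_strict_word w \<longleftrightarrow> length w \<ge> 2 \<and> is_numeral (w ! 0) \<and> is_numeral (w ! 1) \<and>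
     (\<forall>c \<in> set (drop 2 w). is_dir c)"

fun varphi :: "letter \<Rightarrow> letter \<Rightarrow> letter list" where
  "varphi N1 R = [R, U, R]" | "varphi N2 R = [L, U, R]" | "varphi N3 R = [L, D, R]" | "varphi N4 R = [R, D, R]"
| "varphi N1 L = [R, U, L]" | "varphi N2 L = [L, U, L]" | "varphi N3 L = [L, D, L]" | "varphi N4 L = [R, D, L]"
| "varphi N1 U = [U, R, U]" | "varphi N2 U = [U, L, U]" | "varphi N3 U = [D, L, U]" | "varphi N4 U = [D, R, U]"
| "varphi N1 D = [U, R, D]" | "varphi N2 D = [U, L, D]" | "varphi N3 D = [D, L, D]" | "varphi N4 D = [D, R, D]"
| "varphi _ _ = []"

fun phi :: "letter list \<Rightarrow> letter list" where
  "phi (a # b # rest) = varphi a b @ rest"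
| "phi _ = []"

fun Phi :: "letter list \<Rightarrow> letter list set" where
  "Phi [N1] = {[U, R], [R, U]}"
| "Phi [N2] = {[U, L], [L, U]}"
| "Phi [N3] = {[D, L], [L, D]}"
| "Phi [N4] = {[R, D], [D, R]}"
| "Phi (a # b # rest) = {phi (a # b # rest)}"
| "Phi _ = {}"

end

theory Submission
  imports Defs
begin

text \<open>In a realization of a pin word, whether an earlier pin lies to the left of (below) pin k
  depends only on the letters encoding pins k - 1 and k and on whether the earlier pin is pin k - 1:
  a numeral or a horizontal direction puts pin k beyond all earlier pins, while a vertical direction
  puts it horizontally between pin k - 1 and all earlier pins, on the side decided by the previous
  letter.  The map phi replaces the two leading numerals of u by three direction letters carrying
  the same information.  Hence if phi(u_2 ... u_m) occurs in phi(w) at position p \<ge> 3, the pin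
  of a realization of w just before the occurrence, together with the pins of the occurrence
  except its first one, lie relative to each other exactly as the pins of a realization of u:
  they form an occurrence of pi in sigma.  Reflection in the diagonal reduces the vertical
  statements to the horizontal ones.\<close>

definition moves_right :: "letter \<Rightarrow> bool" where
  "moves_right c \<longleftrightarrow> c \<in> {N1, N4, R}"

definition moves_left :: "letter \<Rightarrow> bool" where
  "moves_left c \<longleftrightarrow> c \<in> {N2, N3, L}"

lemma letter_horizontal_cases: "moves_right c \<or> moves_left c \<or> c \<in> {U, D}"
  by (cases c) (simp_all add: moves_right_def moves_left_def)

fun transpose_letter :: "letter \<Rightarrow> letter" where
  "transpose_letter N1 = N1" | "transpose_letter N2 = N4" | "transpose_letter N3 = N3"
| "transpose_letter N4 = N2" | "transpose_letter U = R" | "transpose_letter R = U"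
| "transpose_letter D = L" | "transpose_letter L = D"

lemma is_numeral_transpose_letter: "is_numeral (transpose_letter c) \<longleftrightarrow> is_numeral c"
  by (cases c) (simp_all add: is_numeral_def)

lemma enc_ok_moves_right: "enc_ok pre p c \<Longrightarrow> moves_right c \<Longrightarrow> Max (fst ` set pre) < fst p"
  by (cases c) (auto simp: moves_right_def enc_ok_def Let_def right_of_def)

lemma enc_ok_moves_left: "enc_ok pre p c \<Longrightarrow> moves_left c \<Longrightarrow> fst p < Min (fst ` set pre)"
  by (cases c) (auto simp: moves_left_def enc_ok_def Let_def left_of_def)

lemma enc_ok_vertical:
  "enc_ok pre p c \<Longrightarrow> c \<in> {U, D} \<Longrightarrow> Max (snd ` set pre) < snd p \<or> snd p < Min (snd ` set pre)"
  by (auto simp: enc_ok_def Let_def above_def below_def)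

lemma enc_ok_direction_separates:
  "enc_ok pre p c \<Longrightarrow> is_dir c \<Longrightarrow> separates p {last pre} (set (butlast pre))"
  by (cases c) (auto simp: is_dir_def enc_ok_def Let_def)

lemma separates_swap:
  "separates (prod.swap p) (prod.swap ` A) (prod.swap ` B) \<longleftrightarrow> separates p A B"
  by (auto simp: separates_def sep_h_def sep_v_def)

lemma in_bbox_swap: "in_bbox (prod.swap p) (prod.swap ` S) \<longleftrightarrow> in_bbox p S"
  by (auto simp: in_bbox_def image_image)

lemma independent_swap:
  assumes "independent p S"
  shows "independent (prod.swap p) (prod.swap ` S)"
  unfolding independent_def in_bbox_swap
proof (intro conjI notI)
  show "in_bbox p S \<Longrightarrow> False" using assms by (simp add: independent_def)
next
  assume "\<exists>A B. A \<noteq> {} \<and> B \<noteq> {} \<and> A \<union> B = prod.swap ` S \<and> A \<inter> B = {} \<and>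
    separates (prod.swap p) A B"
  then obtain A B where ne: "A \<noteq> {}" "B \<noteq> {}" and cover: "A \<union> B = prod.swap ` S"
    and disj: "A \<inter> B = {}" and sep: "separates (prod.swap p) A B" by blast
  have inv: "prod.swap ` prod.swap ` X = X" for X :: "pin set"
    by (simp add: image_image)
  have "prod.swap ` A \<union> prod.swap ` B = S"
    using cover by (metis image_Un inv)
  moreover have "prod.swap ` A \<inter> prod.swap ` B = {}"
    using disj by (metis image_Int image_empty inj_swap)
  moreover have "separates p (prod.swap ` A) (prod.swap ` B)"
    using sep separates_swap[of p "prod.swap ` A" "prod.swap ` B"] by (simp only: inv)
  moreover have "prod.swap ` A \<noteq> {}" "prod.swap ` B \<noteq> {}"
    using ne by simp_all
  ultimately have "\<exists>A B. A \<noteq> {} \<and> B \<noteq> {} \<and> A \<union> B = S \<and> A \<inter> B = {} \<and> separates p A B"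
    by (intro exI[of _ "prod.swap ` A"] exI[of _ "prod.swap ` B"] conjI)
  then show False using assms unfolding independent_def by blast
qed

lemma enc_ok_transpose:
  assumes "enc_ok pre p c" "pre \<noteq> []"
  shows "enc_ok (map prod.swap pre) (prod.swap p) (transpose_letter c)"
proof -
  have set_swap: "set (map prod.swap pre) = prod.swap ` set pre" by simp
  have sep: "separates (prod.swap p) {last (map prod.swap pre)} (set (butlast (map prod.swap pre)))
      \<longleftrightarrow> separates p {last pre} (set (butlast pre))"
    using assms(2) separates_swap[of p "{last pre}" "set (butlast pre)"]
    by (simp add: last_map flip: map_butlast)
  have ind: "independent p (set pre) \<Longrightarrow> independent (prod.swap p) (set (map prod.swap pre))"
    using independent_swap by simp
  have coords: "fst ` prod.swap ` S = snd ` S" "snd ` prod.swap ` S = fst ` S" for S :: "pin set"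
    by (simp_all add: image_image)
  show ?thesis
    using assms(1) ind
    by (cases c) (simp_all only: enc_ok_def Let_def sep set_swap coords above_def below_def
        left_of_def right_of_def transpose_letter.simps letter.case fst_swap snd_swap)
qed

section \<open>Realizations of pin words\<close>

text \<open>Q ! 0 is the origin p_0 and Q ! k, for k \<ge> 1, is the pin encoded by w ! (k - 1).\<close>

definition realizes :: "pin list \<Rightarrow> letter list \<Rightarrow> bool" where
  "realizes Q w \<longleftrightarrow> distinct (map fst Q) \<and> distinct (map snd Q) \<and> length Q = length w + 1 \<and>
     is_numeral (w ! 0) \<and> (\<forall>k. 1 \<le> k \<and> k \<le> length w \<longrightarrow> enc_ok (take k Q) (Q ! k) (w ! (k - 1)))"

lemma realizes_enc_ok:
  "realizes Q w \<Longrightarrow> 1 \<le> k \<Longrightarrow> k \<le> length w \<Longrightarrow> enc_ok (take k Q) (Q ! k) (w ! (k - 1))"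
  by (simp add: realizes_def)

lemma realizes_length: "realizes Q w \<Longrightarrow> length Q = length w + 1"
  by (simp add: realizes_def)

lemma realizes_transpose:
  assumes "realizes Q w"
  shows "realizes (map prod.swap Q) (map transpose_letter w)"
  unfolding realizes_def
proof (intro conjI allI impI)
  show "distinct (map fst (map prod.swap Q))" "distinct (map snd (map prod.swap Q))"
    using assms by (simp_all add: realizes_def comp_def)
  show "length (map prod.swap Q) = length (map transpose_letter w) + 1"
    using assms by (simp add: realizes_def)
  show "is_numeral (map transpose_letter w ! 0)"
    using assms by (cases w) (simp_all add: realizes_def is_numeral_transpose_letter)
next
  fix k assume k: "1 \<le> k \<and> k \<le> length (map transpose_letter w)"
  then have "take k Q \<noteq> []" "k < length Q" "k - 1 < length w"
    using realizes_length[OF assms] by auto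
  moreover have "enc_ok (take k Q) (Q ! k) (w ! (k - 1))"
    using realizes_enc_ok[OF assms] k by simp
  ultimately show "enc_ok (take k (map prod.swap Q)) (map prod.swap Q ! k) (map transpose_letter w ! (k - 1))"
    using enc_ok_transpose by (simp add: take_map)
qed

lemma corresponds_realizes:
  assumes "corresponds w s" "is_numeral (w ! 0)"
  obtains p0 ps where "length ps = length w" "order_iso (set ps) (diagram s)" "realizes (p0 # ps) w"
proof -
  obtain p0 ps where len: "length ps = length w" and seq: "pin_seq (p0 # ps)"
    and iso: "order_iso (set ps) (diagram s)"
    and enc: "\<forall>i < length w. enc_ok (take (i + 1) (p0 # ps)) (ps ! i) (w ! i)"
    using assms(1) unfolding corresponds_def by blast
  have "enc_ok (take k (p0 # ps)) ((p0 # ps) ! k) (w ! (k - 1))" if "1 \<le> k" "k \<le> length w" for k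
    using enc that by (cases k) auto
  then have "realizes (p0 # ps) w"
    using len seq assms(2) unfolding realizes_def pin_seq_def by simp
  then show thesis using that len iso by blast
qed

lemma pin_mem_take: "a < k \<Longrightarrow> a < length Q \<Longrightarrow> Q ! a \<in> set (take k Q)"
  by (metis in_set_conv_nth length_take min_less_iff_conj nth_take)

lemma realizes_moves_right:
  assumes "realizes Q w" "1 \<le> k" "k \<le> length w" "moves_right (w ! (k - 1))" "a < k"
  shows "fst (Q ! a) < fst (Q ! k)"
proof -
  have "Q ! a \<in> set (take k Q)"
    using assms(3,5) realizes_length[OF assms(1)] by (simp add: pin_mem_take)
  then have "fst (Q ! a) \<le> Max (fst ` set (take k Q))" by simp
  also have "\<dots> < fst (Q ! k)"
    using enc_ok_moves_right realizes_enc_ok assms(1-4) by blast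
  finally show ?thesis .
qed

lemma realizes_moves_left:
  assumes "realizes Q w" "1 \<le> k" "k \<le> length w" "moves_left (w ! (k - 1))" "a < k"
  shows "fst (Q ! k) < fst (Q ! a)"
proof -
  have "Q ! a \<in> set (take k Q)"
    using assms(3,5) realizes_length[OF assms(1)] by (simp add: pin_mem_take)
  have "fst (Q ! k) < Min (fst ` set (take k Q))"
    using enc_ok_moves_left realizes_enc_ok assms(1-4) by blast
  also have "\<dots> \<le> fst (Q ! a)" using \<open>Q ! a \<in> set (take k Q)\<close> by simp
  finally show ?thesis .
qed

lemma realizes_vertical_outside:
  assumes "realizes Q w" "1 \<le> k" "k \<le> length w" "w ! (k - 1) \<in> {U, D}"
  shows "(\<forall>a<k. snd (Q ! a) < snd (Q ! k)) \<or> (\<forall>a<k. snd (Q ! k) < snd (Q ! a))"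
proof -
  have mem: "a < k \<Longrightarrow> Q ! a \<in> set (take k Q)" for a
    using assms(3) realizes_length[OF assms(1)] by (simp add: pin_mem_take)
  have "Max (snd ` set (take k Q)) < snd (Q ! k) \<or> snd (Q ! k) < Min (snd ` set (take k Q))"
    using enc_ok_vertical realizes_enc_ok assms by blast
  moreover have "snd (Q ! a) \<le> Max (snd ` set (take k Q))" "Min (snd ` set (take k Q)) \<le> snd (Q ! a)"
    if "a < k" for a
    using mem[OF that] by simp_all
  ultimately show ?thesis by fastforce
qed

lemma realizes_vertical_separates:
  assumes "realizes Q w" "2 \<le> k" "k \<le> length w" "w ! (k - 1) \<in> {U, D}"
  shows "(fst (Q ! (k - 1)) < fst (Q ! k) \<and> (\<forall>a<k - 1. fst (Q ! k) < fst (Q ! a))) \<or>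
         (fst (Q ! k) < fst (Q ! (k - 1)) \<and> (\<forall>a<k - 1. fst (Q ! a) < fst (Q ! k)))"
proof -
  have len: "length Q = length w + 1" using realizes_length[OF assms(1)] .
  have mem: "a < k - 1 \<Longrightarrow> Q ! a \<in> set (take (k - 1) Q)" for a
    using assms(3) len by (simp add: pin_mem_take)
  have "take k Q = take (k - 1) Q @ [Q ! (k - 1)]"
    using take_Suc_conv_app_nth[of "k - 1" Q] assms(2,3) len by simp
  moreover have "is_dir (w ! (k - 1))" using assms(4) by (auto simp: is_dir_def)
  ultimately have "separates (Q ! k) {Q ! (k - 1)} (set (take (k - 1) Q))"
    using enc_ok_direction_separates[OF realizes_enc_ok[OF assms(1), of k]] assms(2,3) by simp
  moreover have "\<not> sep_h (Q ! k) {Q ! (k - 1)} (set (take (k - 1) Q))"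
  proof -
    have "(\<forall>a<k. snd (Q ! a) < snd (Q ! k)) \<or> (\<forall>a<k. snd (Q ! k) < snd (Q ! a))"
      using realizes_vertical_outside[OF assms(1) _ assms(3,4)] assms(2) by simp
    then have "(snd (Q ! 0) < snd (Q ! k) \<and> snd (Q ! (k - 1)) < snd (Q ! k)) \<or>
        (snd (Q ! k) < snd (Q ! 0) \<and> snd (Q ! k) < snd (Q ! (k - 1)))"
      using assms(2) by (meson diff_less less_le_trans zero_less_one zero_less_numeral)
    moreover have "Q ! 0 \<in> set (take (k - 1) Q)" using mem assms(2) by simp
    ultimately show ?thesis
      unfolding sep_h_def by (meson less_asym singletonI)
  qed
  ultimately have "sep_v (Q ! k) {Q ! (k - 1)} (set (take (k - 1) Q))"
    by (simp add: separates_def)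
  then show ?thesis
    unfolding sep_v_def using mem by fastforce
qed

text \<open>Pin k - 1 lies horizontally between pin k - 2 and the origin, so pin k cannot lie on one
  side of pin k - 1 together with both of them.\<close>

lemma realizes_no_consecutive_verticals:
  assumes "realizes Q w" "3 \<le> k" "k \<le> length w" "w ! (k - 2) \<in> {U, D}" "w ! (k - 1) \<in> {U, D}"
  shows False
proof -
  have prev: "k - 1 - 1 = k - 2" by simp
  have "(fst (Q ! (k - 2)) < fst (Q ! (k - 1)) \<and> (\<forall>a<k - 2. fst (Q ! (k - 1)) < fst (Q ! a))) \<or>
        (fst (Q ! (k - 1)) < fst (Q ! (k - 2)) \<and> (\<forall>a<k - 2. fst (Q ! a) < fst (Q ! (k - 1))))"
    using realizes_vertical_separates[OF assms(1), of "k - 1"] assms(2-4) unfolding prev by simp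
  then have "(fst (Q ! (k - 2)) < fst (Q ! (k - 1)) \<and> fst (Q ! (k - 1)) < fst (Q ! 0)) \<or>
        (fst (Q ! (k - 1)) < fst (Q ! (k - 2)) \<and> fst (Q ! 0) < fst (Q ! (k - 1)))"
    using assms(2) by force
  moreover have "(fst (Q ! (k - 1)) < fst (Q ! k) \<and> (\<forall>a<k - 1. fst (Q ! k) < fst (Q ! a))) \<or>
        (fst (Q ! k) < fst (Q ! (k - 1)) \<and> (\<forall>a<k - 1. fst (Q ! a) < fst (Q ! k)))"
    using realizes_vertical_separates[OF assms(1), of k] assms(2,3,5) by simp
  then have "(fst (Q ! (k - 1)) < fst (Q ! k) \<and> fst (Q ! k) < fst (Q ! (k - 2)) \<and> fst (Q ! k) < fst (Q ! 0)) \<or>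
        (fst (Q ! k) < fst (Q ! (k - 1)) \<and> fst (Q ! (k - 2)) < fst (Q ! k) \<and> fst (Q ! 0) < fst (Q ! k))"
    using assms(2) by force
  ultimately show False by linarith
qed

lemma realizes_after_vertical:
  assumes "realizes Q w" "2 \<le> k" "k \<le> length w" "w ! (k - 1) \<in> {U, D}" "a < k"
  shows "fst (Q ! a) < fst (Q ! k) \<longleftrightarrow>
    (if a = k - 1 then moves_left (w ! (k - 2)) else moves_right (w ! (k - 2)))"
proof -
  have sep: "(fst (Q ! (k - 1)) < fst (Q ! k) \<and> (\<forall>a<k - 1. fst (Q ! k) < fst (Q ! a))) \<or>
         (fst (Q ! k) < fst (Q ! (k - 1)) \<and> (\<forall>a<k - 1. fst (Q ! a) < fst (Q ! k)))"
    using realizes_vertical_separates assms(1-4) by blast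
  have prev: "k - 1 - 1 = k - 2" by simp
  have a_cases: "a = k - 1 \<or> a < k - 1" using assms(5) by linarith
  consider "moves_right (w ! (k - 2))" | "moves_left (w ! (k - 2))" | "w ! (k - 2) \<in> {U, D}"
    using letter_horizontal_cases by blast
  then show ?thesis
  proof cases
    case 1
    then have "fst (Q ! 0) < fst (Q ! (k - 1))"
      using realizes_moves_right[OF assms(1), of "k - 1" 0] assms(2,3) prev by simp
    then have "fst (Q ! k) < fst (Q ! (k - 1)) \<and> (\<forall>a<k - 1. fst (Q ! a) < fst (Q ! k))"
      using sep assms(2) by force
    moreover have "\<not> moves_left (w ! (k - 2))"
      using 1 by (auto simp: moves_right_def moves_left_def)
    ultimately show ?thesis
      using 1 a_cases by auto
  next
    case 2
    then have "fst (Q ! (k - 1)) < fst (Q ! 0)"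
      using realizes_moves_left[OF assms(1), of "k - 1" 0] assms(2,3) prev by simp
    then have "fst (Q ! (k - 1)) < fst (Q ! k) \<and> (\<forall>a<k - 1. fst (Q ! k) < fst (Q ! a))"
      using sep assms(2) by force
    moreover have "\<not> moves_right (w ! (k - 2))"
      using 2 by (auto simp: moves_right_def moves_left_def)
    ultimately show ?thesis
      using 2 a_cases by auto
  next
    case 3
    moreover have "is_numeral (w ! 0)" using assms(1) by (simp add: realizes_def)
    ultimately have "3 \<le> k"
      using assms(2) by (cases "k = 2") (auto simp: is_numeral_def)
    then show ?thesis
      using realizes_no_consecutive_verticals[OF assms(1)] 3 assms(3,4) by blast
  qed
qed

section \<open>Relative position of two pins\<close>

text \<open>Whether an earlier pin lies to the left of the pin encoded by c, when the preceding letter is p;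
  adj tells whether the earlier pin is the immediately preceding one.\<close>

fun earlier_left :: "letter \<Rightarrow> letter \<Rightarrow> bool \<Rightarrow> bool" where
  "earlier_left p N1 adj = True" | "earlier_left p N4 adj = True" | "earlier_left p R adj = True"
| "earlier_left p N2 adj = False" | "earlier_left p N3 adj = False" | "earlier_left p L adj = False"
| "earlier_left p U adj = (if adj then moves_left p else moves_right p)"
| "earlier_left p D adj = (if adj then moves_left p else moves_right p)"

definition earlier_below :: "letter \<Rightarrow> letter \<Rightarrow> bool \<Rightarrow> bool" where
  "earlier_below p c adj = earlier_left (transpose_letter p) (transpose_letter c) adj"

definition relpos :: "pin \<Rightarrow> pin \<Rightarrow> bool \<times> bool" where
  "relpos p q = (fst p < fst q, snd p < snd q)"

definition letter_relpos :: "letter \<Rightarrow> letter \<Rightarrow> bool \<Rightarrow> bool \<times> bool" where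
  "letter_relpos p c adj = (earlier_left p c adj, earlier_below p c adj)"

lemma realizes_earlier_left:
  assumes "realizes Q w" "1 \<le> k" "k \<le> length w" "a < k"
  shows "fst (Q ! a) < fst (Q ! k) \<longleftrightarrow> earlier_left (w ! (k - 2)) (w ! (k - 1)) (a = k - 1)"
proof (cases "w ! (k - 1) \<in> {U, D}")
  case True
  moreover have "is_numeral (w ! 0)" using assms(1) by (simp add: realizes_def)
  ultimately have "2 \<le> k"
    using assms(2) by (cases "k = 1") (auto simp: is_numeral_def)
  then show ?thesis
    using realizes_after_vertical[OF assms(1) _ assms(3) _ assms(4)] True by auto
next
  case False
  then consider "moves_right (w ! (k - 1))" | "moves_left (w ! (k - 1))"
    using letter_horizontal_cases by blast
  then show ?thesis
  proof cases
    case 1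
    then show ?thesis
      using realizes_moves_right[OF assms(1-3) _ assms(4)]
      by (cases "w ! (k - 1)") (simp_all add: moves_right_def)
  next
    case 2
    then show ?thesis
      using realizes_moves_left[OF assms(1-3) _ assms(4)]
      by (cases "w ! (k - 1)") (auto simp: moves_left_def)
  qed
qed

lemma realizes_earlier_below:
  assumes "realizes Q w" "1 \<le> k" "k \<le> length w" "a < k"
  shows "snd (Q ! a) < snd (Q ! k) \<longleftrightarrow> earlier_below (w ! (k - 2)) (w ! (k - 1)) (a = k - 1)"
proof -
  have "k < length Q" using realizes_length[OF assms(1)] assms(3) by simp
  then show ?thesis
    using realizes_earlier_left[OF realizes_transpose[OF assms(1)], of k a] assms(2-4)
    by (simp add: earlier_below_def)
qed

lemma realizes_relpos:
  "realizes Q w \<Longrightarrow> 1 \<le> k \<Longrightarrow> k \<le> length w \<Longrightarrow> a < k \<Longrightarrow>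
    relpos (Q ! a) (Q ! k) = letter_relpos (w ! (k - 2)) (w ! (k - 1)) (a = k - 1)"
  by (simp add: relpos_def letter_relpos_def realizes_earlier_left realizes_earlier_below)

lemma varphi_shape: "is_numeral x \<Longrightarrow> is_dir y \<Longrightarrow> \<exists>a b. varphi x y = [a, b, y]"
  by (cases x; cases y) (simp_all add: is_numeral_def is_dir_def)

lemma letter_relpos_varphi_first:
  "is_numeral x \<Longrightarrow> is_dir y \<Longrightarrow>
    letter_relpos (varphi x y ! 0) (varphi x y ! 1) False = letter_relpos p x adj"
  by (cases x; cases y)
    (simp_all add: is_numeral_def is_dir_def letter_relpos_def earlier_below_def moves_right_def moves_left_def)

lemma letter_relpos_varphi_second:
  "is_numeral x \<Longrightarrow> is_dir y \<Longrightarrow> letter_relpos (varphi x y ! 1) y adj = letter_relpos x y adj"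
  by (cases x; cases y)
    (simp_all add: is_numeral_def is_dir_def letter_relpos_def earlier_below_def moves_right_def moves_left_def)

lemma letter_relpos_Phi_numeral:
  "is_numeral x \<Longrightarrow> v \<in> Phi [x] \<Longrightarrow>
    length v = 2 \<and> letter_relpos (v ! 0) (v ! 1) False = letter_relpos p x adj"
  by (cases x)
    (auto simp: is_numeral_def letter_relpos_def earlier_below_def moves_right_def moves_left_def)

lemma phi_strict_word: "strict_word w \<Longrightarrow> \<exists>a b. phi w = a # b # tl w"
proof -
  assume w: "strict_word w"
  then obtain x y rest where "w = x # y # rest"
    unfolding strict_word_def by (metis One_nat_def Suc_1 Suc_le_length_iff)
  moreover have "is_numeral x" "is_dir y" using w calculation by (auto simp: strict_word_def)
  ultimately show ?thesis using varphi_shape by fastforce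
qed

lemma strict_word_factor_of_phi:
  assumes "strict_word w" "phi w = y @ v @ y'" "2 \<le> length y"
  shows "\<exists>z z'. w = z @ v @ z' \<and> length z = length y - 1"
proof -
  obtain a b where "phi w = a # b # tl w" using phi_strict_word[OF assms(1)] by blast
  then have "tl w = drop 2 (phi w)" by simp
  also have "\<dots> = drop 2 y @ v @ y'" using assms(2,3) by simp
  finally have "tl w = drop 2 y @ v @ y'" .
  moreover have "w \<noteq> []" using assms(1) by (auto simp: strict_word_def)
  ultimately have "w = (hd w # drop 2 y) @ v @ y'" by (metis append_Cons list.collapse)
  moreover have "length (hd w # drop 2 y) = length y - 1" using assms(3) by simp
  ultimately show ?thesis by blast
qed

text \<open>On the left the pin pair (1, 2) counts as non-adjacent, since the pins of w matched with u_1
  and u_2 are not consecutive.\<close>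

lemma Phi_tail_letter_relpos:
  assumes "quasi_strict_word u" "v \<in> Phi (drop 1 u)"
  shows "length v = length u \<and>
    (\<forall>a b. 1 \<le> a \<and> a < b \<and> b \<le> length u \<longrightarrow>
      letter_relpos (v ! (b - 2)) (v ! (b - 1)) (2 \<le> a \<and> a = b - 1) =
      letter_relpos (u ! (b - 2)) (u ! (b - 1)) (a = b - 1))"
proof -
  obtain x0 x1 rest where u: "u = x0 # x1 # rest" and x1: "is_numeral x1"
    using assms(1) unfolding quasi_strict_word_def
    by (metis One_nat_def Suc_1 Suc_le_length_iff nth_Cons_0 nth_Cons_Suc)
  show ?thesis
  proof (cases rest)
    case Nil
    then show ?thesis
      using letter_relpos_Phi_numeral[OF x1, of v x0 True] assms(2) u
      by (auto simp: numeral_2_eq_2 le_Suc_eq)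
  next
    case (Cons x2 rest')
    have x2: "is_dir x2" using assms(1) u Cons by (simp add: quasi_strict_word_def)
    obtain v0 v1 where vphi: "varphi x1 x2 = [v0, v1, x2]" using varphi_shape[OF x1 x2] by blast
    have v: "v = v0 # v1 # x2 # rest'" using assms(2) u Cons vphi by simp
    have "letter_relpos (v ! (b - 2)) (v ! (b - 1)) (2 \<le> a \<and> a = b - 1) =
      letter_relpos (u ! (b - 2)) (u ! (b - 1)) (a = b - 1)"
      if ab: "1 \<le> a" "a < b" "b \<le> length u" for a b
    proof -
      consider "b = 2" | "b = 3" | "4 \<le> b" using ab by linarith
      then show ?thesis
      proof cases
        case 1
        then show ?thesis
          using letter_relpos_varphi_first[OF x1 x2, of x0 "a = 1"] u v vphi ab by simp
      next
        case 2
        moreover have "(2 \<le> a \<and> a = 2) \<longleftrightarrow> a = 2" by auto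
        ultimately show ?thesis
          using letter_relpos_varphi_second[OF x1 x2, of "a = 2"] u v vphi Cons by simp
      next
        case 3
        then obtain j where "b = j + 4" by (metis add.commute le_Suc_ex)
        moreover have "(2 \<le> a \<and> a = b - 1) \<longleftrightarrow> a = b - 1" using 3 by auto
        ultimately show ?thesis using u v Cons by (simp add: numeral_eq_Suc)
      qed
    qed
    then show ?thesis using u v Cons by simp
  qed
qed

section \<open>Pattern containment from embeddings of pin sequences\<close>

definition diagram_points :: "nat list \<Rightarrow> pin list" where
  "diagram_points s = map (\<lambda>i. (int (i + 1), int (s ! i))) [0..<length s]"

lemma set_diagram_points: "set (diagram_points s) = diagram s"
  by (auto simp: diagram_points_def diagram_def)

lemma length_diagram_points [simp]: "length (diagram_points s) = length s"
  by (simp add: diagram_points_def)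

lemma relpos_diagram_points:
  "i < length s \<Longrightarrow> j < length s \<Longrightarrow>
    relpos (diagram_points s ! i) (diagram_points s ! j) = (i < j, s ! i < s ! j)"
  by (simp add: diagram_points_def relpos_def)

lemma relpos_flip:
  "fst p \<noteq> fst q \<Longrightarrow> snd p \<noteq> snd q \<Longrightarrow> relpos q p = map_prod Not Not (relpos p q)"
  by (auto simp: relpos_def)

lemma order_iso_relpos:
  "order_iso X Y \<longleftrightarrow> (\<exists>g. bij_betw g X Y \<and> (\<forall>p\<in>X. \<forall>q\<in>X. relpos (g p) (g q) = relpos p q))"
  by (auto simp: order_iso_def relpos_def)

lemma order_iso_sym:
  assumes "order_iso X Y"
  shows "order_iso Y X"
proof -
  obtain g where g: "bij_betw g X Y" and rel: "\<forall>p\<in>X. \<forall>q\<in>X. relpos (g p) (g q) = relpos p q"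
    using assms by (auto simp: order_iso_relpos)
  have "bij_betw (inv_into X g) Y X" using g by (rule bij_betw_inv_into)
  moreover have "relpos (inv_into X g p) (inv_into X g q) = relpos p q" if "p \<in> Y" "q \<in> Y" for p q
  proof -
    have "inv_into X g p \<in> X" "inv_into X g q \<in> X"
      using \<open>bij_betw (inv_into X g) Y X\<close> that by (simp_all add: bij_betw_apply)
    moreover have "g (inv_into X g p) = p" "g (inv_into X g q) = q"
      using g that by (simp_all add: bij_betw_inv_into_right)
    ultimately show ?thesis using rel by metis
  qed
  ultimately show ?thesis unfolding order_iso_relpos by blast
qed

lemma order_iso_index_map:
  assumes "order_iso (set A) (set B)"
  shows "\<exists>h. \<forall>i<length A. h i < length B \<and>
    (\<forall>j<length A. relpos (B ! h i) (B ! h j) = relpos (A ! i) (A ! j))"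
proof -
  obtain g where g: "bij_betw g (set A) (set B)"
    and rel: "\<forall>p\<in>set A. \<forall>q\<in>set A. relpos (g p) (g q) = relpos p q"
    using assms by (auto simp: order_iso_relpos)
  have "\<forall>i<length A. \<exists>j<length B. B ! j = g (A ! i)"
    using g by (metis bij_betw_apply in_set_conv_nth nth_mem)
  then obtain h where "\<forall>i<length A. h i < length B \<and> B ! h i = g (A ! i)" by metis
  then show ?thesis using rel by (auto intro!: exI[of _ h])
qed

lemma distinct_map_nth_neq:
  "distinct (map g xs) \<Longrightarrow> i < length xs \<Longrightarrow> j < length xs \<Longrightarrow> i \<noteq> j \<Longrightarrow> g (xs ! i) \<noteq> g (xs ! j)"
  by (metis distinct_conv_nth length_map nth_map)

lemma patt_le_of_relpos_embedding:
  assumes iso: "order_iso (set ps) (diagram \<pi>)" "order_iso (set qs) (diagram \<sigma>)"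
    and dist: "distinct (map fst ps)" "distinct (map snd ps)" "distinct (map fst qs)" "distinct (map snd qs)"
    and f: "\<forall>i<length ps. f i < length qs" "\<forall>i j. i < j \<longrightarrow> j < length ps \<longrightarrow> f i < f j"
    and rel: "\<forall>i j. i < j \<longrightarrow> j < length ps \<longrightarrow> relpos (ps ! i) (ps ! j) = relpos (qs ! f i) (qs ! f j)"
  shows "patt_le \<pi> \<sigma>"
proof -
  have rel_all: "relpos (ps ! i) (ps ! j) = relpos (qs ! f i) (qs ! f j)"
    if "i < length ps" "j < length ps" for i j
  proof (cases i j rule: linorder_cases)
    case greater
    have "fst (ps ! j) \<noteq> fst (ps ! i)" "snd (ps ! j) \<noteq> snd (ps ! i)"
      using distinct_map_nth_neq[OF dist(1)] distinct_map_nth_neq[OF dist(2)] that greater by simp_all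
    moreover have "fst (qs ! f j) \<noteq> fst (qs ! f i)" "snd (qs ! f j) \<noteq> snd (qs ! f i)"
      using distinct_map_nth_neq[OF dist(3)] distinct_map_nth_neq[OF dist(4)] f that greater
      by (metis less_irrefl)+
    ultimately show ?thesis
      using rel greater that relpos_flip by metis
  qed (use rel that in \<open>auto simp: relpos_def\<close>)
  have "order_iso (set (diagram_points \<pi>)) (set ps)"
    using order_iso_sym[OF iso(1)] by (simp add: set_diagram_points)
  then obtain \<alpha> where \<alpha>: "\<forall>i<length \<pi>. \<alpha> i < length ps \<and> (\<forall>j<length \<pi>.
      relpos (ps ! \<alpha> i) (ps ! \<alpha> j) = relpos (diagram_points \<pi> ! i) (diagram_points \<pi> ! j))"
    using order_iso_index_map[of "diagram_points \<pi>" ps] by auto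
  have "order_iso (set qs) (set (diagram_points \<sigma>))"
    using iso(2) by (simp add: set_diagram_points)
  then obtain G where G: "\<forall>j<length qs. G j < length \<sigma> \<and> (\<forall>j'<length qs.
      relpos (diagram_points \<sigma> ! G j) (diagram_points \<sigma> ! G j') = relpos (qs ! j) (qs ! j'))"
    using order_iso_index_map[of qs "diagram_points \<sigma>"] by auto
  define H where "H i = G (f (\<alpha> i))" for i
  have "(i < j, \<pi> ! i < \<pi> ! j) = (H i < H j, \<sigma> ! H i < \<sigma> ! H j)"
    if "i < length \<pi>" "j < length \<pi>" for i j
  proof -
    have "(i < j, \<pi> ! i < \<pi> ! j) = relpos (diagram_points \<pi> ! i) (diagram_points \<pi> ! j)"
      using that by (simp add: relpos_diagram_points)
    also have "\<dots> = relpos (ps ! \<alpha> i) (ps ! \<alpha> j)" using \<alpha> that by simp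
    also have "\<dots> = relpos (qs ! f (\<alpha> i)) (qs ! f (\<alpha> j))" using rel_all \<alpha> that by simp
    also have "\<dots> = relpos (diagram_points \<sigma> ! H i) (diagram_points \<sigma> ! H j)"
      using G f(1) \<alpha> that unfolding H_def by simp
    also have "\<dots> = (H i < H j, \<sigma> ! H i < \<sigma> ! H j)"
      using G f(1) \<alpha> that unfolding H_def by (simp add: relpos_diagram_points)
    finally show ?thesis .
  qed
  moreover have "H i < length \<sigma>" if "i < length \<pi>" for i
    using \<alpha> G f(1) that unfolding H_def by blast
  ultimately show ?thesis
    unfolding patt_le_def by (intro exI[of _ H]) (auto simp: prod_eq_iff, meson less_trans)
qed

section \<open>Transfer along an occurrence of phi(u_2 ... u_m) in phi(w)\<close>

text \<open>Pins of u are matched with pins of w = z @ v @ z', where length z = s: u_1 with the pin just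
  before the occurrence of v, and u_k for k \<ge> 2 with the k-th pin of the occurrence.\<close>

definition factor_index :: "nat \<Rightarrow> nat \<Rightarrow> nat" where
  "factor_index s i = (if i = 0 then s - 1 else s + i)"

lemma realizes_relpos_factor:
  assumes u: "quasi_strict_word u" "realizes (p0 # ps) u" "length ps = length u"
    and v: "v \<in> Phi (drop 1 u)"
    and w: "realizes (q0 # qs) (z @ v @ z')" "1 \<le> length z"
    and ij: "i < j" "j < length ps"
  shows "relpos (ps ! i) (ps ! j) =
    relpos (qs ! factor_index (length z) i) (qs ! factor_index (length z) j)"
proof -
  define s where "s = length z"
  have lv: "length v = length u" using Phi_tail_letter_relpos[OF u(1) v] by simp
  have adj: "(2 \<le> i + 1 \<and> i + 1 = j) \<longleftrightarrow> factor_index s i + 1 = s + j"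
    using w(2) ij(1) by (auto simp: factor_index_def s_def)
  have "relpos (ps ! i) (ps ! j) = relpos ((p0 # ps) ! (i + 1)) ((p0 # ps) ! (j + 1))" by simp
  also have "\<dots> = letter_relpos (u ! (j - 1)) (u ! j) (i + 1 = j)"
    using realizes_relpos[OF u(2), of "j + 1" "i + 1"] ij u(3) by simp
  also have "\<dots> = letter_relpos (v ! (j - 1)) (v ! j) (2 \<le> i + 1 \<and> i + 1 = j)"
    using Phi_tail_letter_relpos[OF u(1) v, THEN conjunct2, rule_format, of "i + 1" "j + 1"] ij u(3)
    by simp
  also have "\<dots> = letter_relpos ((z @ v @ z') ! (s + j - 1)) ((z @ v @ z') ! (s + j))
      (factor_index s i + 1 = s + j)"
  proof -
    obtain j' where "j = Suc j'" using ij(1) by (cases j) auto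
    then have "(z @ v @ z') ! (s + j - 1) = v ! (j - 1)" "(z @ v @ z') ! (s + j) = v ! j"
      using ij u(3) lv by (simp_all add: nth_append s_def)
    then show ?thesis using adj by simp
  qed
  also have "\<dots> = relpos ((q0 # qs) ! (factor_index s i + 1)) ((q0 # qs) ! (s + j + 1))"
  proof -
    have "factor_index s i < s + j" "s + j + 1 \<le> length (z @ v @ z')"
      using ij u(3) lv by (auto simp: factor_index_def s_def)
    then show ?thesis
      using realizes_relpos[OF w(1), of "s + j + 1" "factor_index s i + 1"] by simp
  qed
  also have "\<dots> = relpos (qs ! factor_index s i) (qs ! factor_index s j)"
    using ij by (simp add: factor_index_def)
  finally show ?thesis unfolding s_def .
qed

theorem lemma9:
  fixes u w :: "letter list" and \<pi> \<sigma> :: "nat list"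
  assumes "quasi_strict_word u" and "corresponds u \<pi>"
    and "strict_word w" and "corresponds w \<sigma>"
    and "\<exists>y v y'. v \<in> Phi (drop 1 u) \<and> phi w = y @ v @ y' \<and> length y \<ge> 2"
  shows "patt_le \<pi> \<sigma>"
proof -
  have "is_numeral (u ! 0)" "is_numeral (w ! 0)"
    using assms(1,3) by (simp_all add: quasi_strict_word_def strict_word_def)
  obtain p0 ps where lp: "length ps = length u" and isoP: "order_iso (set ps) (diagram \<pi>)"
    and P: "realizes (p0 # ps) u"
    by (rule corresponds_realizes[OF assms(2) \<open>is_numeral (u ! 0)\<close>])
  obtain q0 qs where lq: "length qs = length w" and isoQ: "order_iso (set qs) (diagram \<sigma>)"
    and Q: "realizes (q0 # qs) w"
    by (rule corresponds_realizes[OF assms(4) \<open>is_numeral (w ! 0)\<close>])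
  obtain y v y' where v: "v \<in> Phi (drop 1 u)" and y: "phi w = y @ v @ y'" "2 \<le> length y"
    using assms(5) by blast
  then obtain z z' where w: "w = z @ v @ z'" and "length z = length y - 1"
    using strict_word_factor_of_phi[OF assms(3)] by blast
  then have z: "1 \<le> length z" using y(2) by simp
  have lv: "length v = length u" using Phi_tail_letter_relpos[OF assms(1) v] by simp
  show ?thesis
  proof (rule patt_le_of_relpos_embedding[OF isoP isoQ])
    show "distinct (map fst ps)" "distinct (map snd ps)" "distinct (map fst qs)" "distinct (map snd qs)"
      using P Q by (simp_all add: realizes_def)
    show "\<forall>i<length ps. factor_index (length z) i < length qs"
      using lp lq lv w z by (auto simp: factor_index_def)
    show "\<forall>i j. i < j \<longrightarrow> j < length ps \<longrightarrow> factor_index (length z) i < factor_index (length z) j"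
      using z by (auto simp: factor_index_def)
    show "\<forall>i j. i < j \<longrightarrow> j < length ps \<longrightarrow> relpos (ps ! i) (ps ! j) =
        relpos (qs ! factor_index (length z) i) (qs ! factor_index (length z) j)"
      using realizes_relpos_factor[OF assms(1) P lp v Q[unfolded w] z] by blast
  qed
qed

end
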